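(* Let $\mathcal{L}\in\mathrm{Mat}_d(\mathbb{Q})$ have no non-trivial invariant subspace over $\mathbb{Q}$, let $K>0$, and let $A\subset \mathbb{Z}^d$ be a finite set with $|A|=n$ and $|A+\mathcal{L} A|\leq Kn$. If $U$ is a vector subspace of $\mathbb{Q}^d$ of dimension $k<d$, then every translate $u+U$ ($u\in\mathbb{Q}^d$) of $U$ contains at most $(Kn)^{1-2^{-k}}$ points of $A$.
   Context: A non-trivial invariant subspace of $\mathcal{L}$ over $\mathbb{Q}$ is a subspace $W\subseteq\mathbb{Q}^d$ with $W\ne\{0\},\mathbb{Q}^d$ and $\mathcal{L}W\subseteq W$. $\mathcal{L}A=\{\mathcal{L}a:a\in A\}$. *)

theory Defs
  imports "HOL-Analysis.Analysis"
begin

text \<open>Vectors of Q^d are modelled as rat ^ 'd (d = CARD('d)); matrices in Mat_d(Q) as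
  rat ^ 'd ^ 'd acting by the matrix-vector product *v.\<close>

definition nontrivial_invariant_subspace :: "rat ^ 'd ^ 'd \<Rightarrow> (rat ^ 'd) set \<Rightarrow> bool" where
  "nontrivial_invariant_subspace L W \<longleftrightarrow>
     vec.subspace W \<and> W \<noteq> {0} \<and> W \<noteq> UNIV \<and> (\<lambda>w. L *v w) ` W \<subseteq> W"

definition integer_vectors :: "(rat ^ 'd) set" where
  "integer_vectors = {a. \<forall>i. a $ i \<in> \<int>}"

definition sumset :: "(rat ^ 'd) set \<Rightarrow> (rat ^ 'd) set \<Rightarrow> (rat ^ 'd) set" where
  "sumset X Y = {x + y | x y. x \<in> X \<and> y \<in> Y}"

end

theory Submission
  imports Defs
begin

text \<open>Induction on \<open>k = dim U\<close>. Put \<open>A' = A \<inter> (u + U)\<close> and \<open>W = U \<inter> L U\<close>. Since \<open>L\<close> has no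
  invariant subspace, \<open>L\<close> is injective and \<open>W\<close> is a proper subspace of \<open>U\<close>, so \<open>dim W < k\<close>.
  If \<open>a + L b = a\<^sub>0 + L b\<^sub>0\<close> with all four points in \<open>A'\<close>, then \<open>a - a\<^sub>0 \<in> U \<inter> L U\<close>, and \<open>b\<close> is
  determined by \<open>a\<close>. Hence every fibre of \<open>(a, b) \<mapsto> a + L b\<close> on \<open>A' \<times> A'\<close> has at most as many
  points as some translate of \<open>W\<close> contains from \<open>A\<close>, which gives
  \<open>|A'|^2 \<le> |A + L A| * (Kn)^(1 - 2^-(k-1)) \<le> (Kn)^(2 - 2^-(k-1))\<close>.\<close>

lemma inj_matrix_vector_mult_if_no_invariant_subspace:
  fixes L :: "rat ^ 'd ^ 'd" and U :: "(rat ^ 'd) set"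
  assumes "\<not> (\<exists>W. nontrivial_invariant_subspace L W)"
    and "vec.subspace U" "U \<noteq> {0}" "U \<noteq> UNIV"
  shows "inj ((*v) L)"
proof (rule ccontr)
  assume "\<not> inj ((*v) L)"
  then obtain x where x: "L *v x = 0" "x \<noteq> 0"
    using vec.inj_iff_eq_0 by auto
  define Z where "Z = {x. L *v x = 0}"
  have "Z \<noteq> UNIV"
  proof
    assume "Z = UNIV"
    then have "(\<lambda>w. L *v w) ` U \<subseteq> U"
      using vec.subspace_0[OF \<open>vec.subspace U\<close>] unfolding Z_def by (auto simp: set_eq_iff)
    then show False
      using assms unfolding nontrivial_invariant_subspace_def by blast
  qed
  moreover have "vec.subspace Z" "Z \<noteq> {0}" "(\<lambda>w. L *v w) ` Z \<subseteq> Z"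
    unfolding Z_def using x by (auto intro: vec.subspace_kernel)
  ultimately show False
    using assms(1) unfolding nontrivial_invariant_subspace_def by blast
qed

lemma dim_inter_image_less_if_no_invariant_subspace:
  fixes L :: "rat ^ 'd ^ 'd" and U :: "(rat ^ 'd) set"
  assumes "\<not> (\<exists>W. nontrivial_invariant_subspace L W)"
    and U: "vec.subspace U" "U \<noteq> {0}" "U \<noteq> UNIV"
  shows "vec.dim (U \<inter> (\<lambda>w. L *v w) ` U) < vec.dim U"
proof -
  define LU where "LU = (\<lambda>w. L *v w) ` U"
  have LU: "vec.subspace LU"
    unfolding LU_def by (rule vec.subspace_image[OF U(1)])
  have "\<not> U \<subseteq> LU"
  proof
    assume "U \<subseteq> LU"
    moreover have "vec.dim LU \<le> vec.dim U"
      unfolding LU_def by (rule vec.dim_image_le[OF matrix_vector_mul_linear_gen])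
    ultimately have "LU = U"
      using vec.subspace_dim_equal[OF U(1) LU] by auto
    then show False
      using assms unfolding LU_def nontrivial_invariant_subspace_def by blast
  qed
  then have "U \<inter> LU \<subset> U" by blast
  moreover have "vec.subspace (U \<inter> LU)"
    using vec.subspace_inter[OF U(1) LU] .
  ultimately show ?thesis
    using vec.dim_psubset[of "U \<inter> LU" U] U(1) unfolding LU_def
    by (simp add: vec.span_eq_iff[THEN iffD2])
qed

lemma card_le_card_image_mult_fibre_bound:
  assumes "finite X" "\<And>s. s \<in> f ` X \<Longrightarrow> real (card {x\<in>X. f x = s}) \<le> M"
  shows "real (card X) \<le> real (card (f ` X)) * M"
proof -
  have X: "X = (\<Union>s\<in>f ` X. {x\<in>X. f x = s})" by auto
  have "card X = (\<Sum>s\<in>f ` X. card {x\<in>X. f x = s})"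
    by (subst X, rule card_UN_disjoint) (use assms(1) in auto)
  then have "real (card X) = (\<Sum>s\<in>f ` X. real (card {x\<in>X. f x = s}))" by simp
  also have "\<dots> \<le> (\<Sum>s\<in>f ` X. M)"
    by (rule sum_mono) (use assms(2) in auto)
  finally show ?thesis by simp
qed

lemma sumset_eq_image_plus: "sumset X Y = (\<lambda>(x, y). x + y) ` (X \<times> Y)"
  unfolding sumset_def by auto

lemma finite_sumset: "finite X \<Longrightarrow> finite Y \<Longrightarrow> finite (sumset X Y)"
  by (simp add: sumset_eq_image_plus)

lemma card_le_card_sumset:
  assumes "finite X" "finite Y" "b \<in> Y"
  shows "card X \<le> card (sumset X Y)"
proof -
  have "card X = card ((\<lambda>x. x + b) ` X)"
    by (simp add: card_image inj_on_def)
  also have "\<dots> \<le> card (sumset X Y)"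
    by (rule card_mono[OF finite_sumset[OF assms(1,2)]])
      (use assms(3) in \<open>auto simp: sumset_def\<close>)
  finally show ?thesis .
qed

lemma fibre_subset_translate_inter_image:
  assumes "vec.subspace U"
    and "a \<in> (\<lambda>x. u + x) ` U" "b \<in> (\<lambda>x. u + x) ` U"
    and "a\<^sub>0 \<in> (\<lambda>x. u + x) ` U" "b\<^sub>0 \<in> (\<lambda>x. u + x) ` U"
    and "a + L *v b = a\<^sub>0 + L *v b\<^sub>0"
  shows "a \<in> (\<lambda>x. a\<^sub>0 + x) ` (U \<inter> (\<lambda>w. L *v w) ` U)"
proof -
  obtain x x\<^sub>0 y y\<^sub>0 where xy: "a = u + x" "a\<^sub>0 = u + x\<^sub>0" "b = u + y" "b\<^sub>0 = u + y\<^sub>0"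
    and "x \<in> U" "x\<^sub>0 \<in> U" "y \<in> U" "y\<^sub>0 \<in> U"
    using assms(2-5) by auto
  have "a - a\<^sub>0 = x - x\<^sub>0" using xy by simp
  then have "a - a\<^sub>0 \<in> U"
    using vec.subspace_diff[OF assms(1) \<open>x \<in> U\<close> \<open>x\<^sub>0 \<in> U\<close>] by simp
  moreover have "a - a\<^sub>0 = L *v (y\<^sub>0 - y)"
    using assms(6) xy by (simp add: matrix_vector_mult_diff_distrib algebra_simps)
  then have "a - a\<^sub>0 \<in> (\<lambda>w. L *v w) ` U"
    using vec.subspace_diff[OF assms(1) \<open>y\<^sub>0 \<in> U\<close> \<open>y \<in> U\<close>] by auto
  ultimately have "a = a\<^sub>0 + (a - a\<^sub>0)" "a - a\<^sub>0 \<in> U \<inter> (\<lambda>w. L *v w) ` U" by auto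
  then show ?thesis by blast
qed

lemma card_slice_squared_le:
  assumes "inj ((*v) L)" "finite A" "vec.subspace U" "0 \<le> M"
    and translate_bound: "\<And>a. a \<in> A \<inter> (\<lambda>x. u + x) ` U \<Longrightarrow>
      real (card (A \<inter> (\<lambda>x. a + x) ` (U \<inter> (\<lambda>w. L *v w) ` U))) \<le> M"
  shows "real (card (A \<inter> (\<lambda>x. u + x) ` U)) ^ 2 \<le> real (card (sumset A ((\<lambda>a. L *v a) ` A))) * M"
proof -
  define A' where "A' = A \<inter> (\<lambda>x. u + x) ` U"
  define f where "f = (\<lambda>(a, b). a + L *v b)"
  have "finite A'" unfolding A'_def using assms(2) by simp
  have fibre_bound: "real (card {p\<in>A' \<times> A'. f p = s}) \<le> M" if s: "s \<in> f ` (A' \<times> A')" for s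
  proof -
    obtain a\<^sub>0 b\<^sub>0 where ab\<^sub>0: "a\<^sub>0 \<in> A'" "b\<^sub>0 \<in> A'" "s = a\<^sub>0 + L *v b\<^sub>0"
      using s unfolding f_def by force
    define F where "F = {p\<in>A' \<times> A'. f p = s}"
    have "inj_on fst F"
    proof (rule inj_onI)
      fix p q assume "p \<in> F" "q \<in> F" "fst p = fst q"
      then have "L *v snd p = L *v snd q"
        unfolding F_def f_def by (auto simp: case_prod_beta)
      then show "p = q"
        using \<open>fst p = fst q\<close> assms(1) by (simp add: prod_eq_iff inj_eq)
    qed
    moreover have "fst ` F \<subseteq> A \<inter> (\<lambda>x. a\<^sub>0 + x) ` (U \<inter> (\<lambda>w. L *v w) ` U)"
    proof
      fix a assume "a \<in> fst ` F"
      then obtain b where "a \<in> A'" "b \<in> A'" "a + L *v b = a\<^sub>0 + L *v b\<^sub>0"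
        unfolding F_def f_def ab\<^sub>0(3) by auto
      then show "a \<in> A \<inter> (\<lambda>x. a\<^sub>0 + x) ` (U \<inter> (\<lambda>w. L *v w) ` U)"
        using fibre_subset_translate_inter_image[OF assms(3)] ab\<^sub>0(1,2)
        unfolding A'_def by blast
    qed
    then have "card (fst ` F) \<le> card (A \<inter> (\<lambda>x. a\<^sub>0 + x) ` (U \<inter> (\<lambda>w. L *v w) ` U))"
      by (rule card_mono[rotated]) (use assms(2) in simp)
    ultimately show ?thesis
      using translate_bound[of a\<^sub>0] ab\<^sub>0(1) unfolding F_def A'_def by (simp add: card_image)
  qed
  have "f ` (A' \<times> A') \<subseteq> sumset A ((\<lambda>a. L *v a) ` A)"
    unfolding f_def sumset_def A'_def by auto
  then have image_le: "card (f ` (A' \<times> A')) \<le> card (sumset A ((\<lambda>a. L *v a) ` A))"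
    by (rule card_mono[rotated]) (simp add: finite_sumset assms(2))
  have "real (card A') ^ 2 = real (card (A' \<times> A'))"
    by (simp add: card_cartesian_product power2_eq_square)
  also have "\<dots> \<le> real (card (f ` (A' \<times> A'))) * M"
    using \<open>finite A'\<close> fibre_bound by (intro card_le_card_image_mult_fibre_bound) auto
  also have "\<dots> \<le> real (card (sumset A ((\<lambda>a. L *v a) ` A))) * M"
    using image_le assms(4) by (intro mult_right_mono) simp_all
  finally show ?thesis unfolding A'_def .
qed

lemma mult_powr_one_minus_two_powr:
  fixes N :: real
  assumes "0 \<le> N"
  shows "N * N powr (1 - 2 powr - real j) = (N powr (1 - 2 powr - real (Suc j))) ^ 2"
proof -
  define t where "t = 2 powr - real j"
  have half: "2 powr - real (Suc j) = t / 2"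
    unfolding t_def by (simp add: powr_diff powr_minus divide_simps)
  have "(N powr (1 - t / 2)) ^ 2 = N powr ((1 - t / 2) + (1 - t / 2))"
    by (simp only: powr_add power2_eq_square)
  also have "\<dots> = N powr (1 + (1 - t))"
    by (simp add: algebra_simps)
  also have "\<dots> = N * N powr (1 - t)"
    by (simp only: powr_add powr_one[OF assms])
  finally show ?thesis
    unfolding half t_def[symmetric] by simp
qed

lemma card_slice_le_powr:
  fixes L :: "rat ^ 'd ^ 'd"
  assumes noinv: "\<not> (\<exists>W. nontrivial_invariant_subspace L W)"
    and "finite A" and N: "real (card (sumset A ((\<lambda>a. L *v a) ` A))) \<le> N"
    and "vec.subspace U" "vec.dim U \<le> j" "j < CARD('d)"
  shows "real (card (A \<inter> (\<lambda>x. u + x) ` U)) \<le> N powr (1 - 2 powr - real j)"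
proof -
  have one_le_N: "1 \<le> N" if "a \<in> A" for a
  proof -
    have "1 \<le> card A"
      using that \<open>finite A\<close> by (simp add: Suc_le_eq card_gt_0_iff) blast
    also have "\<dots> \<le> card (sumset A ((\<lambda>a. L *v a) ` A))"
      using card_le_card_sumset[of A "(\<lambda>a. L *v a) ` A" "L *v a"] \<open>finite A\<close> that by simp
    finally show ?thesis using N by linarith
  qed
  show ?thesis
    using assms(4-6)
  proof (induction j arbitrary: U u)
    case 0
    then have slice: "A \<inter> (\<lambda>x. u + x) ` U \<subseteq> A \<inter> {u}" by auto
    show ?case
    proof (cases "u \<in> A")
      case True
      have "card (A \<inter> (\<lambda>x. u + x) ` U) \<le> card {u}"
        using slice by (intro card_mono) auto
      then show ?thesis using one_le_N[OF True] by simp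
    next
      case False
      then show ?thesis using slice by auto
    qed
  next
    case (Suc j)
    define A' where "A' = A \<inter> (\<lambda>x. u + x) ` U"
    define M where "M = N powr (1 - 2 powr - real j)"
    show ?case
    proof (cases "A' = {}")
      case True
      then show ?thesis unfolding A'_def by simp
    next
      case False
      then have "1 \<le> N"
        using one_le_N unfolding A'_def by blast
      consider "vec.dim U \<le> j" | "vec.dim U = Suc j" using Suc.prems by linarith
      then show ?thesis
      proof cases
        case 1
        then have "real (card A') \<le> M"
          using Suc unfolding A'_def M_def by simp
        also have "M \<le> N powr (1 - 2 powr - real (Suc j))"
          unfolding M_def using \<open>1 \<le> N\<close> by (intro powr_mono) auto
        finally show ?thesis unfolding A'_def .
      next
        case 2
        have U: "U \<noteq> {0}" "U \<noteq> UNIV"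
          using 2 Suc.prems(3) vec_dim_card[where 'a=rat and 'n='d] by auto
        define W where "W = U \<inter> (\<lambda>w. L *v w) ` U"
        have "vec.subspace W"
          unfolding W_def using Suc.prems(1) by (intro vec.subspace_inter vec.subspace_image)
        moreover have "vec.dim W \<le> j"
          using dim_inter_image_less_if_no_invariant_subspace[OF noinv Suc.prems(1) U] 2
          unfolding W_def by simp
        ultimately have W_bound: "real (card (A \<inter> (\<lambda>x. a + x) ` W)) \<le> M" for a
          using Suc.IH Suc.prems(3) unfolding M_def by simp
        have "0 \<le> M" unfolding M_def by simp
        have "real (card A') ^ 2 \<le> real (card (sumset A ((\<lambda>a. L *v a) ` A))) * M"
          unfolding A'_def W_def
          using card_slice_squared_le[OF inj_matrix_vector_mult_if_no_invariant_subspace[OF noinv Suc.prems(1) U]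
              \<open>finite A\<close> Suc.prems(1) \<open>0 \<le> M\<close> W_bound[unfolded W_def]] .
        also have "\<dots> \<le> N * M"
          using N \<open>0 \<le> M\<close> by (rule mult_right_mono)
        also have "\<dots> = (N powr (1 - 2 powr - real (Suc j))) ^ 2"
          unfolding M_def using \<open>1 \<le> N\<close> by (intro mult_powr_one_minus_two_powr) simp
        finally show ?thesis
          unfolding A'_def by (rule power2_le_imp_le) simp
      qed
    qed
  qed
qed

theorem lemma2p4:
  fixes L :: "rat ^ 'd ^ 'd" and K :: real and A :: "(rat ^ 'd) set"
    and n k :: nat and U :: "(rat ^ 'd) set" and u :: "rat ^ 'd"
  assumes "\<not> (\<exists>W. nontrivial_invariant_subspace L W)"
    and "K > 0"
    and "finite A" and "A \<subseteq> integer_vectors" and "card A = n"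
    and "real (card (sumset A ((\<lambda>a. L *v a) ` A))) \<le> K * real n"
    and "vec.subspace U" and "vec.dim U = k" and "k < CARD('d)"
  shows "real (card (A \<inter> (\<lambda>x. u + x) ` U)) \<le> (K * real n) powr (1 - 2 powr (- real k))"
  using card_slice_le_powr[OF assms(1,3,6,7)] assms(8,9) by simp

end
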